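(* Let $X$ be a compact Hausdorff space, $\varphi:X\to X$ a continuous surjection, and let $(Y,\psi)$ be a minimal homeomorphism extension of $(X,\varphi)$. Then $(Y,\psi)$ is conjugate to the canonical homeomorphism extension $(\tilde X,\tilde\varphi)$.
   Context: A system $(Y,\psi)$ ($Y$ compact Hausdorff, $\psi$ a continuous surjection) is an extension of $(X,\varphi)$ if there is a continuous surjection $q:Y\to X$ (the extension map) with $q\circ\psi=\varphi\circ q$; if the map is a homeomorphism it is a conjugacy, and the systems are conjugate. A homeomorphism extension is an extension in which $\psi$ is a homeomorphism. The canonical homeomorphism extension: $\tilde X=\{(x_1,x_2,\dots)\in\prod_{n\ge1}X : x_n=\varphi(x_{n+1})\ \forall n\}$ with product topology, $\tilde\varphi(x_1,x_2,\dots)=(\varphi(x_1),x_1,x_2,\dots)$, extension map $p(x_1,x_2,\dots)=x_1$. A homeomorphism extension $(Y,\psi)$ of $(X,\varphi)$ is minimal if whenever $(Z,\sigma)$ is a homeomorphism extension of $(X,\varphi)$ and $(Y,\psi)$ is an extension of $(Z,\sigma)$ such that the composition of the extension map of $Z$ over $X$ with the extension map of $Y$ over $Z$ equals the extension map of $Y$ over $X$, then $(Y,\psi)$ and $(Z,\sigma)$ are conjugate. *)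

theory Defs
  imports "HOL-Analysis.Analysis"
begin

definition tds :: "'a topology \<Rightarrow> ('a \<Rightarrow> 'a) \<Rightarrow> bool" where
  "tds X f \<longleftrightarrow> compact_space X \<and> Hausdorff_space X \<and> continuous_map X X f
      \<and> f ` topspace X = topspace X"

definition is_extension ::
  "'a topology \<Rightarrow> ('a \<Rightarrow> 'a) \<Rightarrow> 'b topology \<Rightarrow> ('b \<Rightarrow> 'b) \<Rightarrow> ('b \<Rightarrow> 'a) \<Rightarrow> bool" where
  "is_extension X f Y g q \<longleftrightarrow> tds X f \<and> tds Y g \<and> continuous_map Y X q
      \<and> q ` topspace Y = topspace X \<and> (\<forall>y\<in>topspace Y. q (g y) = f (q y))"

definition conjugate :: "'a topology \<Rightarrow> ('a \<Rightarrow> 'a) \<Rightarrow> 'b topology \<Rightarrow> ('b \<Rightarrow> 'b) \<Rightarrow> bool" where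
  "conjugate X f Y g \<longleftrightarrow> (\<exists>h. homeomorphic_map X Y h \<and> (\<forall>x\<in>topspace X. h (f x) = g (h x)))"

definition hom_extension ::
  "'a topology \<Rightarrow> ('a \<Rightarrow> 'a) \<Rightarrow> 'b topology \<Rightarrow> ('b \<Rightarrow> 'b) \<Rightarrow> ('b \<Rightarrow> 'a) \<Rightarrow> bool" where
  "hom_extension X f Y g q \<longleftrightarrow> is_extension X f Y g q \<and> homeomorphic_map Y Y g"

text \<open>The intermediate systems (Z,\<sigma>) range over
  spaces carried by the same type as Y (every such Z is a continuous image of Y,
  so this loses no generality up to conjugacy).\<close>
definition minimal_hom_extension ::
  "'a topology \<Rightarrow> ('a \<Rightarrow> 'a) \<Rightarrow> 'b topology \<Rightarrow> ('b \<Rightarrow> 'b) \<Rightarrow> ('b \<Rightarrow> 'a) \<Rightarrow> bool" where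
  "minimal_hom_extension X f Y g q \<longleftrightarrow> hom_extension X f Y g q \<and>
     (\<forall>(Z::'b topology) \<sigma> r s. hom_extension X f Z \<sigma> r \<and> is_extension Z \<sigma> Y g s
        \<and> (\<forall>y\<in>topspace Y. r (s y) = q y) \<longrightarrow> conjugate Y g Z \<sigma>)"

text \<open>Canonical homeomorphism extension (sequences indexed from 0 instead of 1).\<close>
definition canon_carrier :: "'a topology \<Rightarrow> ('a \<Rightarrow> 'a) \<Rightarrow> (nat \<Rightarrow> 'a) set" where
  "canon_carrier X f = {x. (\<forall>n. x n \<in> topspace X) \<and> (\<forall>n. x n = f (x (Suc n)))}"

definition canon_space :: "'a topology \<Rightarrow> ('a \<Rightarrow> 'a) \<Rightarrow> (nat \<Rightarrow> 'a) topology" where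
  "canon_space X f = subtopology (product_topology (\<lambda>_. X) UNIV) (canon_carrier X f)"

definition canon_map :: "('a \<Rightarrow> 'a) \<Rightarrow> (nat \<Rightarrow> 'a) \<Rightarrow> (nat \<Rightarrow> 'a)" where
  "canon_map f x = (\<lambda>n. case n of 0 \<Rightarrow> f (x 0) | Suc m \<Rightarrow> x m)"

definition canon_proj :: "(nat \<Rightarrow> 'a) \<Rightarrow> 'a" where
  "canon_proj x = x 0"

end

theory Submission
  imports Defs
begin

text \<open>If \<open>g\<close> is the inverse of \<open>\<psi>\<close>, the past itinerary \<open>y \<mapsto> (q (g\<^sup>n y))\<^sub>n\<close> maps \<open>(Y,\<psi>)\<close>
  equivariantly onto the canonical extension \<open>(X\<^sup>~,\<phi>\<^sup>~)\<close>. It is onto because, for a point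
  \<open>x\<close> of \<open>X\<^sup>~\<close>, the closed sets \<open>{y. q (g\<^sup>n y) = x\<^sub>n}\<close> are nonempty and decrease in \<open>n\<close>
  (as \<open>x\<^sub>n = \<phi> x\<^sub>n\<^sub>+\<^sub>1\<close>), so by compactness of \<open>Y\<close> they have a common point.
  Hence \<open>(X\<^sup>~,\<phi>\<^sup>~)\<close> sits between \<open>(Y,\<psi>)\<close> and \<open>(X,\<phi>)\<close>, and minimality makes it conjugate
  to \<open>(Y,\<psi>)\<close>. Since the definition of minimality only quantifies over intermediate systems
  carried by the type of \<open>Y\<close>, the canonical extension is first transported to a homeomorphic
  copy inside that type, using a section of the itinerary map.\<close>

lemma topspace_canon_space: "topspace (canon_space X f) = canon_carrier X f"
  unfolding canon_space_def canon_carrier_def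
  by (auto simp: PiE_def extensional_def)

lemma canon_carrierD:
  assumes "x \<in> canon_carrier X f"
  shows "x n \<in> topspace X" "x n = f (x (Suc n))"
  using assms unfolding canon_carrier_def by blast+

lemma canon_carrierI:
  assumes "\<And>n. x n \<in> topspace X" "\<And>n. x n = f (x (Suc n))"
  shows "x \<in> canon_carrier X f"
  using assms unfolding canon_carrier_def by blast

lemma canon_map_in_canon_carrier:
  assumes "f ` topspace X \<subseteq> topspace X" "x \<in> canon_carrier X f"
  shows "canon_map f x \<in> canon_carrier X f"
proof (rule canon_carrierI)
  fix n
  show "canon_map f x n \<in> topspace X"
    using assms(1) canon_carrierD(1)[OF assms(2)] by (auto simp: canon_map_def split: nat.split)
  show "canon_map f x n = f (canon_map f x (Suc n))"
    using canon_carrierD(2)[OF assms(2), of "n - 1"] by (cases n) (simp_all add: canon_map_def)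
qed

lemma canon_carrier_shift:
  assumes "x \<in> canon_carrier X f"
  shows "(\<lambda>n. x (Suc n)) \<in> canon_carrier X f"
  using canon_carrierD[OF assms] by (intro canon_carrierI) blast+

lemma continuous_map_canon_space_component:
  "continuous_map (canon_space X f) X (\<lambda>x. x n)"
  unfolding canon_space_def
  by (rule continuous_map_from_subtopology)
     (use continuous_map_product_projection[of n UNIV "\<lambda>_. X"] in simp)

lemma continuous_map_into_canon_space:
  assumes "\<And>n. continuous_map Z X (\<lambda>z. h z n)"
    and "\<And>z. z \<in> topspace Z \<Longrightarrow> h z \<in> canon_carrier X f"
  shows "continuous_map Z (canon_space X f) h"
  unfolding canon_space_def continuous_map_in_subtopology continuous_map_componentwise_UNIV
  using assms by blast

lemma homeomorphic_maps_canon_map: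
  assumes "continuous_map X X f"
  shows "homeomorphic_maps (canon_space X f) (canon_space X f) (canon_map f) (\<lambda>x n. x (Suc n))"
  unfolding homeomorphic_maps_def topspace_canon_space
proof (intro conjI ballI)
  have "f ` topspace X \<subseteq> topspace X"
    using assms continuous_map_image_subset_topspace by blast
  moreover have "continuous_map (canon_space X f) X (\<lambda>x. canon_map f x n)" for n
    using continuous_map_compose[OF continuous_map_canon_space_component assms]
      continuous_map_canon_space_component
    by (cases n) (simp_all add: canon_map_def o_def)
  ultimately show "continuous_map (canon_space X f) (canon_space X f) (canon_map f)"
    by (intro continuous_map_into_canon_space)
       (auto simp: topspace_canon_space canon_map_in_canon_carrier)
  show "continuous_map (canon_space X f) (canon_space X f) (\<lambda>x n. x (Suc n))"
    by (intro continuous_map_into_canon_space continuous_map_canon_space_component)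
       (simp add: topspace_canon_space canon_carrier_shift)
  fix x assume "x \<in> canon_carrier X f"
  then show "canon_map f (\<lambda>n. x (Suc n)) = x"
    using canon_carrierD(2)[of x X f 0] by (auto simp: canon_map_def split: nat.split)
qed (simp add: canon_map_def)

lemma compact_space_canon_space:
  assumes "compact_space X" "Hausdorff_space X" "continuous_map X X f"
  shows "compact_space (canon_space X f)"
proof -
  let ?P = "product_topology (\<lambda>_::nat. X) UNIV"
  have component: "continuous_map ?P X (\<lambda>x. x n)" for n
    using continuous_map_product_projection[of n UNIV "\<lambda>_. X"] by simp
  have "closedin ?P {x \<in> topspace ?P. x n = f (x (Suc n))}" for n
    using closedin_continuous_maps_eq[OF assms(2) component
        continuous_map_compose[OF component assms(3)]]
    by (simp add: o_def)
  then have "closedin ?P (\<Inter>n. {x \<in> topspace ?P. x n = f (x (Suc n))})"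
    by (intro closedin_Inter) auto
  moreover have "canon_carrier X f = (\<Inter>n. {x \<in> topspace ?P. x n = f (x (Suc n))})"
    unfolding canon_carrier_def topspace_product_topology PiE_UNIV_domain Pi_iff by blast
  ultimately show ?thesis
    unfolding canon_space_def using assms(1)
    by (intro compact_space_subtopology closedin_compact_space)
       (auto simp: compact_space_product_topology)
qed

lemma Hausdorff_space_canon_space:
  "Hausdorff_space X \<Longrightarrow> Hausdorff_space (canon_space X f)"
  unfolding canon_space_def
  by (intro Hausdorff_space_subtopology) (simp add: Hausdorff_space_product_topology)

lemma tds_canon_space: "tds X f \<Longrightarrow> tds (canon_space X f) (canon_map f)"
  unfolding tds_def
  using compact_space_canon_space Hausdorff_space_canon_space
    homeomorphic_maps_map[THEN iffD1, OF homeomorphic_maps_canon_map]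
    homeomorphic_imp_continuous_map homeomorphic_imp_surjective_map
  by metis

lemma canon_proj_surjective:
  assumes "f ` topspace X = topspace X"
  shows "canon_proj ` canon_carrier X f = topspace X"
proof
  show "canon_proj ` canon_carrier X f \<subseteq> topspace X"
    by (auto simp: canon_proj_def dest: canon_carrierD(1))
  show "topspace X \<subseteq> canon_proj ` canon_carrier X f"
  proof
    fix x assume x: "x \<in> topspace X"
    define pre where "pre y = (SOME z. z \<in> topspace X \<and> f z = y)" for y
    have pre: "pre y \<in> topspace X \<and> f (pre y) = y" if "y \<in> topspace X" for y
    proof -
      have "y \<in> f ` topspace X"
        using assms that by simp
      then obtain z where "z \<in> topspace X \<and> f z = y"
        by blast
      then show ?thesis
        unfolding pre_def by (rule someI)
    qed
    have orbit: "(pre ^^ n) x \<in> topspace X" for n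
    proof (induction n)
      case (Suc n)
      then show ?case using pre by simp
    qed (simp add: x)
    have "(\<lambda>n. (pre ^^ n) x) \<in> canon_carrier X f"
    proof (rule canon_carrierI)
      fix n
      show "(pre ^^ n) x \<in> topspace X" by (rule orbit)
      show "(pre ^^ n) x = f ((pre ^^ Suc n) x)"
        using pre[OF orbit[of n]] by simp
    qed
    moreover have "canon_proj (\<lambda>n. (pre ^^ n) x) = x"
      by (simp add: canon_proj_def)
    ultimately show "x \<in> canon_proj ` canon_carrier X f"
      by (metis image_eqI)
  qed
qed

lemma hom_extension_canon_space:
  assumes "tds X f"
  shows "hom_extension X f (canon_space X f) (canon_map f) canon_proj"
  unfolding hom_extension_def is_extension_def
proof (intro conjI ballI)
  show "tds X f" "tds (canon_space X f) (canon_map f)"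
    using assms tds_canon_space by blast+
  show "continuous_map (canon_space X f) X canon_proj"
    unfolding canon_proj_def by (rule continuous_map_canon_space_component)
  show "canon_proj ` topspace (canon_space X f) = topspace X"
    unfolding topspace_canon_space using assms
    by (intro canon_proj_surjective) (simp add: tds_def)
  show "homeomorphic_map (canon_space X f) (canon_space X f) (canon_map f)"
    using assms homeomorphic_maps_canon_map[THEN homeomorphic_maps_imp_map]
    unfolding tds_def by blast
qed (simp add: canon_proj_def canon_map_def)

lemma homeomorphic_maps_funpow:
  assumes "homeomorphic_maps X X f g"
  shows "homeomorphic_maps X X (f ^^ n) (g ^^ n)"
proof (induction n)
  case (Suc n)
  from homeomorphic_maps_compose[OF conjI[OF Suc.IH assms]] show ?case
    by (metis funpow.simps(2) funpow_Suc_right)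
qed (simp add: homeomorphic_maps_id id_def[symmetric])

definition canon_lift :: "('b \<Rightarrow> 'a) \<Rightarrow> ('b \<Rightarrow> 'b) \<Rightarrow> 'b \<Rightarrow> nat \<Rightarrow> 'a" where
  "canon_lift q g y = (\<lambda>n. q ((g ^^ n) y))"

context
  fixes X :: "'a topology" and f :: "'a \<Rightarrow> 'a"
    and Y :: "'b topology" and \<psi> g :: "'b \<Rightarrow> 'b" and q :: "'b \<Rightarrow> 'a"
  assumes ext: "is_extension X f Y \<psi> q" and inv: "homeomorphic_maps Y Y \<psi> g"
begin

private lemma q_continuous: "continuous_map Y X q"
  and q_equivariant: "y \<in> topspace Y \<Longrightarrow> q (\<psi> y) = f (q y)"
  and q_surjective: "q ` topspace Y = topspace X"
  using ext unfolding is_extension_def by auto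

private lemma funpow_in_topspace:
  assumes "y \<in> topspace Y"
  shows "(g ^^ n) y \<in> topspace Y" "(\<psi> ^^ n) y \<in> topspace Y"
    and "(g ^^ n) ((\<psi> ^^ n) y) = y" "\<psi> (g y) = y"
  using homeomorphic_maps_funpow[OF inv, of n] inv assms
  unfolding homeomorphic_maps_def
  by (meson continuous_map_image_subset_topspace image_subset_iff)+

lemma canon_lift_in_canon_carrier:
  assumes "y \<in> topspace Y"
  shows "canon_lift q g y \<in> canon_carrier X f"
proof (rule canon_carrierI)
  fix n
  have gn: "(g ^^ Suc n) y \<in> topspace Y" "\<psi> ((g ^^ Suc n) y) = (g ^^ n) y"
    using funpow_in_topspace(1)[OF assms, of "Suc n"]
      funpow_in_topspace(4)[OF funpow_in_topspace(1)[OF assms]]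
    by simp_all
  then show "canon_lift q g y n = f (canon_lift q g y (Suc n))"
    using q_equivariant by (metis canon_lift_def)
  show "canon_lift q g y n \<in> topspace X"
    using funpow_in_topspace(1)[OF assms] q_continuous
    by (simp add: canon_lift_def continuous_map_def Pi_iff)
qed

private lemma continuous_map_canon_lift_component:
  "continuous_map Y X (\<lambda>y. canon_lift q g y n)"
proof -
  have "continuous_map Y Y (g ^^ n)"
    using homeomorphic_maps_funpow[OF inv, of n] by (simp add: homeomorphic_maps_def)
  from continuous_map_compose[OF this q_continuous] show ?thesis
    by (simp add: canon_lift_def o_def)
qed

lemma continuous_map_canon_lift: "continuous_map Y (canon_space X f) (canon_lift q g)"
  by (intro continuous_map_into_canon_space continuous_map_canon_lift_component
      canon_lift_in_canon_carrier)

lemma canon_lift_equivariant: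
  assumes "y \<in> topspace Y"
  shows "canon_lift q g (\<psi> y) = canon_map f (canon_lift q g y)"
proof
  fix n
  have "g (\<psi> y) = y"
    using funpow_in_topspace(3)[OF assms, of 1] by simp
  then show "canon_lift q g (\<psi> y) n = canon_map f (canon_lift q g y) n"
    using assms q_equivariant
    by (cases n) (simp_all add: canon_lift_def canon_map_def funpow_swap1)
qed

lemma canon_lift_surjective: "canon_lift q g ` topspace Y = canon_carrier X f"
proof
  show "canon_lift q g ` topspace Y \<subseteq> canon_carrier X f"
    using canon_lift_in_canon_carrier by blast
  show "canon_carrier X f \<subseteq> canon_lift q g ` topspace Y"
  proof
    fix x assume x: "x \<in> canon_carrier X f"
    define A where "A n = {y \<in> topspace Y. q ((g ^^ n) y) = x n}" for n
    have "closedin Y (A n)" for n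
      unfolding A_def
    proof (rule closedin_continuous_maps_eq)
      show "Hausdorff_space X" using ext by (simp add: is_extension_def tds_def)
      show "continuous_map Y X (\<lambda>y. q ((g ^^ n) y))"
        using continuous_map_canon_lift_component[of n] by (simp add: canon_lift_def)
    qed (use canon_carrierD(1)[OF x] in simp)
    moreover have "A n \<noteq> {}" for n
    proof -
      obtain z where z: "z \<in> topspace Y" "q z = x n"
        using q_surjective canon_carrierD(1)[OF x] by (metis imageE)
      then have "(\<psi> ^^ n) z \<in> A n"
        using funpow_in_topspace by (simp add: A_def)
      then show ?thesis by blast
    qed
    moreover have "decseq A"
    proof (rule decseq_SucI, rule subsetI)
      fix n y assume "y \<in> A (Suc n)"
      then have y: "y \<in> topspace Y" "q (g ((g ^^ n) y)) = x (Suc n)"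
        by (simp_all add: A_def)
      have gn: "g ((g ^^ n) y) \<in> topspace Y" "\<psi> (g ((g ^^ n) y)) = (g ^^ n) y"
        using funpow_in_topspace(1)[OF y(1), of "Suc n"]
          funpow_in_topspace(4)[OF funpow_in_topspace(1)[OF y(1)]]
        by simp_all
      have "x n = f (x (Suc n))"
        by (rule canon_carrierD(2)[OF x])
      also have "\<dots> = f (q (g ((g ^^ n) y)))"
        using y(2) by simp
      also have "\<dots> = q ((g ^^ n) y)"
        using q_equivariant[OF gn(1)] gn(2) by simp
      finally show "y \<in> A n" using y by (simp add: A_def)
    qed
    moreover have "compact_space Y" using ext by (simp add: is_extension_def tds_def)
    ultimately obtain y where "y \<in> (\<Inter>n. A n)"
      using compact_space_imp_nest by blast
    then have "y \<in> topspace Y" "canon_lift q g y = x"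
      by (auto simp: A_def canon_lift_def)
    then show "x \<in> canon_lift q g ` topspace Y"
      by blast
  qed
qed

lemma is_extension_canon_lift:
  "is_extension (canon_space X f) (canon_map f) Y \<psi> (canon_lift q g)"
  using ext tds_canon_space continuous_map_canon_lift canon_lift_surjective
    canon_lift_equivariant
  unfolding is_extension_def topspace_canon_space by blast

end

lemma homeomorphic_copy_on_domain_type:
  fixes Y :: "'b topology" and Q :: "'b \<Rightarrow> 'c"
  assumes "Q ` topspace Y = topspace K"
  obtains Z :: "'b topology" and e where "homeomorphic_maps Z K Q e"
proof
  define e where "e = inv_into (topspace Y) Q"
  have Qe: "Q (e x) = x" if "x \<in> topspace K" for x
    using assms that by (simp add: e_def f_inv_into_f)
  let ?Z = "pullback_topology (e ` topspace K) Q K"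
  have topspace_Z: "topspace ?Z = e ` topspace K"
    using Qe by (auto simp: topspace_pullback_topology)
  show "homeomorphic_maps ?Z K Q e"
    unfolding homeomorphic_maps_def
  proof (intro conjI ballI)
    show "continuous_map ?Z K Q"
      using continuous_map_pullback[OF continuous_map_id] by simp
    have "continuous_map K K (Q \<circ> e)"
      by (rule continuous_map_eq[OF continuous_map_id]) (simp add: Qe)
    then show "continuous_map K ?Z e"
      by (rule continuous_map_pullback') auto
  qed (auto simp: topspace_Z Qe)
qed

lemma conjugate_trans:
  assumes "conjugate X f Y g" "conjugate Y g Z h"
  shows "conjugate X f Z h"
proof -
  obtain u v where u: "homeomorphic_map X Y u" "\<forall>x\<in>topspace X. u (f x) = g (u x)"
    and v: "homeomorphic_map Y Z v" "\<forall>y\<in>topspace Y. v (g y) = h (v y)"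
    using assms unfolding conjugate_def by blast
  have "u x \<in> topspace Y" if "x \<in> topspace X" for x
    using u(1) that homeomorphic_imp_surjective_map by blast
  then show ?thesis
    unfolding conjugate_def using homeomorphic_map_compose[OF u(1) v(1)] u(2) v(2) by auto
qed

context
  fixes Z :: "'b topology" and K :: "'c topology" and h k
  assumes hk: "homeomorphic_maps Z K h k"
begin

private lemma h_homeomorphic: "homeomorphic_map Z K h"
  and k_homeomorphic: "homeomorphic_map K Z k"
  and h_k: "x \<in> topspace K \<Longrightarrow> h (k x) = x"
  using hk unfolding homeomorphic_maps_map by auto

private lemma h_in: "z \<in> topspace Z \<Longrightarrow> h z \<in> topspace K"
  using h_homeomorphic homeomorphic_imp_surjective_map by blast

lemma tds_conjugate_copy:
  assumes "tds K \<sigma>"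
  shows "tds Z (k \<circ> \<sigma> \<circ> h)"
proof -
  have ZK: "Z homeomorphic_space K"
    using hk homeomorphic_space_def by blast
  have "continuous_map Z Z (k \<circ> \<sigma> \<circ> h)"
    using assms homeomorphic_imp_continuous_map[OF h_homeomorphic]
      homeomorphic_imp_continuous_map[OF k_homeomorphic]
    by (auto simp: tds_def intro: continuous_map_compose)
  moreover have "(k \<circ> \<sigma> \<circ> h) ` topspace Z = topspace Z"
    using assms homeomorphic_imp_surjective_map[OF h_homeomorphic]
      homeomorphic_imp_surjective_map[OF k_homeomorphic]
    unfolding tds_def by (metis image_comp)
  ultimately show ?thesis
    using assms homeomorphic_compact_space[OF ZK] homeomorphic_Hausdorff_space[OF ZK]
    by (simp add: tds_def)
qed

lemma hom_extension_conjugate_copy: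
  assumes "hom_extension X f K \<sigma> p"
  shows "hom_extension X f Z (k \<circ> \<sigma> \<circ> h) (p \<circ> h)"
  unfolding hom_extension_def is_extension_def
proof (intro conjI ballI)
  have ext: "is_extension X f K \<sigma> p" and \<sigma>: "homeomorphic_map K K \<sigma>"
    using assms by (simp_all add: hom_extension_def)
  then show "tds X f" "tds Z (k \<circ> \<sigma> \<circ> h)"
    using tds_conjugate_copy by (simp_all add: is_extension_def)
  show "continuous_map Z X (p \<circ> h)"
    using ext homeomorphic_imp_continuous_map[OF h_homeomorphic]
    by (auto simp: is_extension_def intro: continuous_map_compose)
  show "(p \<circ> h) ` topspace Z = topspace X"
    using ext homeomorphic_imp_surjective_map[OF h_homeomorphic]
    unfolding is_extension_def by (metis image_comp)
  show "homeomorphic_map Z Z (k \<circ> \<sigma> \<circ> h)"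
    using homeomorphic_map_compose[OF homeomorphic_map_compose[OF h_homeomorphic \<sigma>] k_homeomorphic]
    by (simp add: comp_assoc)
  fix z assume "z \<in> topspace Z"
  moreover have "\<sigma> (h z) \<in> topspace K" if "z \<in> topspace Z"
    using \<sigma> h_in[OF that] homeomorphic_imp_surjective_map by blast
  ultimately show "(p \<circ> h) ((k \<circ> \<sigma> \<circ> h) z) = f ((p \<circ> h) z)"
    using ext h_in by (simp add: is_extension_def h_k)
qed

lemma is_extension_conjugate_copy:
  assumes "is_extension K \<sigma> Y g s"
  shows "is_extension Z (k \<circ> \<sigma> \<circ> h) Y g (k \<circ> s)"
  unfolding is_extension_def
proof (intro conjI ballI)
  show "tds Z (k \<circ> \<sigma> \<circ> h)" "tds Y g"
    using assms tds_conjugate_copy by (simp_all add: is_extension_def)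
  show "continuous_map Y Z (k \<circ> s)"
    using assms homeomorphic_imp_continuous_map[OF k_homeomorphic]
    by (auto simp: is_extension_def intro: continuous_map_compose)
  show "(k \<circ> s) ` topspace Y = topspace Z"
    using assms homeomorphic_imp_surjective_map[OF k_homeomorphic]
    unfolding is_extension_def by (metis image_comp)
  fix y assume "y \<in> topspace Y"
  moreover have "s y \<in> topspace K" if "y \<in> topspace Y"
    using assms that by (auto simp: is_extension_def)
  ultimately show "(k \<circ> s) (g y) = (k \<circ> \<sigma> \<circ> h) ((k \<circ> s) y)"
    using assms by (simp add: is_extension_def h_k)
qed

lemma conjugate_conjugate_copy:
  assumes "\<sigma> ` topspace K \<subseteq> topspace K"
  shows "conjugate Z (k \<circ> \<sigma> \<circ> h) K \<sigma>"
  unfolding conjugate_def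
proof (intro exI conjI ballI)
  show "homeomorphic_map Z K h" by (rule h_homeomorphic)
  fix z assume "z \<in> topspace Z"
  then show "h ((k \<circ> \<sigma> \<circ> h) z) = \<sigma> (h z)"
    using assms h_in h_k by auto
qed

end

lemma minimal_hom_extension_conjugate:
  fixes Y :: "'b topology" and K :: "'c topology"
  assumes minimal: "minimal_hom_extension X f Y g q"
    and hom_ext: "hom_extension X f K \<sigma> p" and ext: "is_extension K \<sigma> Y g s"
    and factor: "\<forall>y\<in>topspace Y. p (s y) = q y"
  shows "conjugate Y g K \<sigma>"
proof -
  have s_onto: "s ` topspace Y = topspace K"
    using ext by (simp add: is_extension_def)
  then obtain Z :: "'b topology" and e where copy: "homeomorphic_maps Z K s e"
    by (rule homeomorphic_copy_on_domain_type)
  have "(p \<circ> s) ((e \<circ> s) y) = q y" if "y \<in> topspace Y" for y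
  proof -
    have "s y \<in> topspace K"
      using s_onto that by blast
    then show ?thesis
      using copy factor that by (simp add: homeomorphic_maps_def)
  qed
  then have Y_Z: "conjugate Y g Z (e \<circ> \<sigma> \<circ> s)"
    using minimal hom_extension_conjugate_copy[OF copy hom_ext]
      is_extension_conjugate_copy[OF copy ext]
    unfolding minimal_hom_extension_def by blast
  have "\<sigma> ` topspace K \<subseteq> topspace K"
    using ext by (simp add: is_extension_def tds_def)
  from conjugate_trans[OF Y_Z conjugate_conjugate_copy[OF copy this]] show ?thesis .
qed

theorem lemma2:
  fixes X :: "'a topology" and \<phi> :: "'a \<Rightarrow> 'a"
    and Y :: "'b topology" and \<psi> :: "'b \<Rightarrow> 'b" and q :: "'b \<Rightarrow> 'a"
  assumes "compact_space X" and "Hausdorff_space X"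
    and "continuous_map X X \<phi>" and "\<phi> ` topspace X = topspace X"
    and "minimal_hom_extension X \<phi> Y \<psi> q"
  shows "conjugate Y \<psi> (canon_space X \<phi>) (canon_map \<phi>)"
proof -
  have ext: "is_extension X \<phi> Y \<psi> q" and "homeomorphic_map Y Y \<psi>"
    using assms(5) by (simp_all add: minimal_hom_extension_def hom_extension_def)
  then obtain g where inv: "homeomorphic_maps Y Y \<psi> g"
    using homeomorphic_map_maps by blast
  have canon: "hom_extension X \<phi> (canon_space X \<phi>) (canon_map \<phi>) canon_proj"
    using assms(1-4) by (simp add: hom_extension_canon_space tds_def)
  have lift: "is_extension (canon_space X \<phi>) (canon_map \<phi>) Y \<psi> (canon_lift q g)"
    using ext inv by (rule is_extension_canon_lift)
  have "\<forall>y\<in>topspace Y. canon_proj (canon_lift q g y) = q y"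
    by (simp add: canon_proj_def canon_lift_def)
  then show ?thesis
    by (rule minimal_hom_extension_conjugate[OF assms(5) canon lift])
qed

end
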